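(* Let $q$ be a prime power, let $\gamma$ be a primitive element of $\mathbb{F}_{q^2}$, and for any integer $a$ let $h_a(x)\in\mathbb{F}_q[x]$ be the minimal polynomial of $\gamma^{-a}$ over $\mathbb{F}_q$. For integers $e_1,e_2$ let $\mathcal{C}_{((q+1)e_1,e_2)}$ be the cyclic code of length $q^2-1$ over $\mathbb{F}_q$ with parity-check polynomial $h_{(q+1)e_1}(x)h_{e_2}(x)$. Let $\mathcal{N}$ be the number of distinct cyclic codes of the form $\mathcal{C}_{((q+1)e_1,e_2)}$, of length $q^2-1$ and dimension $3$, where $e_1,e_2$ range over all integers with $\gcd(q-1,2e_1-e_2)=1$ and $\gcd(q+1,e_2)=1$. Then $$\mathcal{N}=\frac{\phi(q^2-1)(q-1)}{2},$$ where $\phi$ is Euler's totient function. *)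

theory Defs
  imports "HOL-Computational_Algebra.Polynomial" "HOL-Number_Theory.Totient" "HOL-Library.Cardinality"
begin

text \<open>The big field F_{q^2} is a finite field type 'a with q^2 elements;
  F_q is realised as its unique subfield of order q, namely the set of
  elements fixed by x |-> x^q.\<close>
definition subfield_Fq :: "nat \<Rightarrow> 'a::field set" where
  "subfield_Fq q = {x. x ^ q = x}"

definition poly_over :: "'a::field set \<Rightarrow> 'a poly \<Rightarrow> bool" where
  "poly_over K p \<longleftrightarrow> (\<forall>i. coeff p i \<in> K)"

definition minpoly_over :: "'a::field set \<Rightarrow> 'a \<Rightarrow> 'a poly" where
  "minpoly_over K \<alpha> = (THE p. poly_over K p \<and> lead_coeff p = 1 \<and> poly p \<alpha> = 0 \<and>
     (\<forall>r. poly_over K r \<and> r \<noteq> 0 \<and> poly r \<alpha> = 0 \<longrightarrow> degree p \<le> degree r))"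

text \<open>Cyclic code of length n over K with parity-check polynomial h: codewords
  are identified with polynomials of degree < n over K; the code is the set of
  multiples of the generator polynomial g = (x^n - 1) / h.\<close>
definition cyclic_code_check :: "'a::field set \<Rightarrow> nat \<Rightarrow> 'a poly \<Rightarrow> 'a poly set" where
  "cyclic_code_check K n h =
     {c. poly_over K c \<and> degree c < n \<and> ((monom 1 n - 1) div h) dvd c}"

definition K_span :: "'a::field set \<Rightarrow> 'a poly set \<Rightarrow> 'a poly set" where
  "K_span K B = {(\<Sum>b\<in>B. smult (c b) b) | c. \<forall>b\<in>B. c b \<in> K}"

definition K_independent :: "'a::field set \<Rightarrow> 'a poly set \<Rightarrow> bool" where
  "K_independent K B \<longleftrightarrow>
     (\<forall>c. (\<forall>b\<in>B. c b \<in> K) \<and> (\<Sum>b\<in>B. smult (c b) b) = 0 \<longrightarrow> (\<forall>b\<in>B. c b = 0))"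

definition K_dim_eq :: "'a::field set \<Rightarrow> 'a poly set \<Rightarrow> nat \<Rightarrow> bool" where
  "K_dim_eq K C k \<longleftrightarrow>
     (\<exists>B. finite B \<and> card B = k \<and> B \<subseteq> C \<and> K_independent K B \<and> K_span K B = C)"

definition primitive_element :: "'a::{finite,field} \<Rightarrow> bool" where
  "primitive_element \<gamma> \<longleftrightarrow> (\<forall>x. x \<noteq> 0 \<longrightarrow> (\<exists>k::nat. x = \<gamma> ^ k))"

end

theory Submission
  imports Defs
begin

text \<open>
  For x in the subfield F_q with x \<noteq> 0 and y outside F_q, the parity-check polynomial
  h = (X - x)(X - y)(X - y^q) is the product of the minimal polynomials of x and y and divides
  X^n - 1. The code it defines consists of the multiples of degree < n of g = (X^n - 1) / h, so
  it has dimension deg h = 3, and it determines h, hence x and the set {y, y^q}.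
  For x = \<gamma>^(-(q+1) e1) and y = \<gamma>^(-e2) the two gcd conditions say exactly that
  y / x = \<gamma>^((q+1) e1 - e2) is again a primitive element. Hence the codes are the images of
  the (q - 1) \<phi>(q^2 - 1) pairs (x, y) with x \<in> F_q^* and y / x primitive, and every code is
  the image of exactly the two pairs (x, y) and (x, y^q).
\<close>

text \<open>The library's \<open>finite_field_power_card_eq_same\<close> is stated for the class
  \<open>finite_field\<close>, which the sort \<open>{finite, field}\<close> does not entail.\<close>

lemma field_power_card_minus_one:
  fixes x :: "'a::{finite,field}"
  assumes "x \<noteq> 0"
  shows "x ^ (CARD('a) - 1) = 1"
proof -
  let ?U = "UNIV - {0::'a}"
  have "(\<Prod>y\<in>?U. x * y) = \<Prod>?U"
    by (rule prod.reindex_bij_witness[of _ "\<lambda>y. y / x" "\<lambda>y. x * y"]) (use assms in auto)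
  moreover have "(\<Prod>y\<in>?U. x * y) = x ^ card ?U * \<Prod>?U"
    by (simp add: prod.distrib)
  moreover have "\<Prod>?U \<noteq> 0"
    by simp
  ultimately show ?thesis
    by (simp add: card_Diff_singleton)
qed

lemma field_power_card_eq_same:
  fixes x :: "'a::{finite,field}"
  shows "x ^ CARD('a) = x"
proof (cases "x = 0")
  case False
  have "CARD('a) = Suc (CARD('a) - 1)"
    using finite_UNIV_card_ge_0[where 'a='a] by simp
  then have "x ^ CARD('a) = x * x ^ (CARD('a) - 1)"
    by (metis power_Suc)
  then show ?thesis
    using field_power_card_minus_one[OF False] by simp
qed (simp add: finite_UNIV_card_ge_0)

lemma CHAR_eq_if_card_eq_prime_power:
  assumes "prime p" and "CARD('a::{finite,field}) = p ^ m"
  shows "CHAR('a) = p"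
proof -
  have prime: "prime CHAR('a)"
    by (simp add: finite_imp_CHAR_pos prime_CHAR_semidom)
  have "(\<Sum>x\<in>UNIV. x + 1) = (\<Sum>x\<in>UNIV. x :: 'a)"
    by (rule sum.reindex_bij_witness[of _ "\<lambda>x. x - 1" "\<lambda>x. x + 1"]) auto
  then have "of_nat CARD('a) = (0::'a)"
    by (simp add: sum.distrib)
  then have "CHAR('a) dvd p ^ m"
    unfolding of_nat_eq_0_iff_char_dvd assms(2) .
  then have "CHAR('a) dvd p"
    using prime prime_dvd_power by blast
  then show ?thesis
    using prime assms(1) by (simp add: primes_dvd_imp_eq)
qed

lemma power_eq_power_mod:
  fixes x :: "'a::monoid_mult"
  assumes "x ^ n = 1"
  shows "x ^ i = x ^ (i mod n)"
proof -
  have "x ^ i = x ^ (n * (i div n) + i mod n)"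
    by simp
  also have "\<dots> = (x ^ n) ^ (i div n) * x ^ (i mod n)"
    by (simp only: power_add power_mult)
  finally show ?thesis
    using assms by simp
qed

lemma power_int_eq_power_mod:
  fixes x :: "'a::field"
  assumes "x ^ n = 1" and "n > 0"
  shows "x powi z = x ^ nat (z mod int n)"
proof -
  have "x \<noteq> 0"
    using assms by (auto simp: power_0_left)
  have "x powi z = x powi (int n * (z div int n) + z mod int n)"
    by simp
  also have "\<dots> = (x powi int n) powi (z div int n) * x powi (z mod int n)"
    using \<open>x \<noteq> 0\<close> by (simp only: power_int_add power_int_mult simp_thms)
  also have "\<dots> = x powi int (nat (z mod int n))"
    using assms by simp
  finally show ?thesis
    by (simp only: power_int_of_nat)
qed

lemma minpoly_over_eqI:
  assumes K_diff: "\<And>a b. a \<in> K \<Longrightarrow> b \<in> K \<Longrightarrow> a - b \<in> K"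
    and "poly_over K m" and "lead_coeff m = 1" and "poly m \<alpha> = 0"
    and minimal: "\<And>r. poly_over K r \<Longrightarrow> r \<noteq> 0 \<Longrightarrow> poly r \<alpha> = 0 \<Longrightarrow> degree m \<le> degree r"
  shows "minpoly_over K \<alpha> = m"
  unfolding minpoly_over_def
proof (rule the_equality)
  fix p
  assume p: "poly_over K p \<and> lead_coeff p = 1 \<and> poly p \<alpha> = 0 \<and>
    (\<forall>r. poly_over K r \<and> r \<noteq> 0 \<and> poly r \<alpha> = 0 \<longrightarrow> degree p \<le> degree r)"
  moreover have "m \<noteq> 0" "p \<noteq> 0"
    using p assms(3) by auto
  ultimately have "degree p = degree m"
    using assms by (simp add: le_antisym)
  show "p = m"
  proof (rule ccontr)
    assume "p \<noteq> m"
    have "poly_over K (p - m)"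
      using p assms(2) K_diff by (simp add: poly_over_def)
    moreover have "poly (p - m) \<alpha> = 0"
      using p assms(4) by simp
    moreover have "degree (p - m) < degree m"
    proof -
      have "degree (p - m) \<le> degree m"
        using \<open>degree p = degree m\<close> degree_diff_le[of p "degree m" m] by simp
      moreover have "coeff (p - m) (degree m) = 0"
        using p assms(3) \<open>degree p = degree m\<close> by simp
      ultimately show ?thesis
        using \<open>p \<noteq> m\<close> by (metis le_neq_implies_less leading_coeff_0_iff right_minus_eq)
    qed
    ultimately show False
      using minimal \<open>p \<noteq> m\<close> by fastforce
  qed
qed (use assms in blast)

lemma linear_factors_dvd_if_roots:
  fixes p :: "'a::idom poly"
  assumes "finite A" and "\<And>a. a \<in> A \<Longrightarrow> poly p a = 0"
  shows "(\<Prod>a\<in>A. [:-a, 1:]) dvd p"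
  using assms
proof (induction A arbitrary: p rule: finite_induct)
  case (insert a A)
  obtain r where p: "p = [:-a, 1:] * r"
    using insert.prems[of a] by (auto simp: poly_eq_0_iff_dvd)
  have "poly r b = 0" if "b \<in> A" for b
    using insert.prems[of b] that insert.hyps(2) by (auto simp: p)
  then have "(\<Prod>a\<in>A. [:-a, 1:]) dvd r"
    by (rule insert.IH)
  then show ?case
    unfolding p prod.insert[OF insert.hyps] by (rule mult_dvd_mono[OF dvd_refl])
qed simp

lemma monic_eq_if_dvd:
  fixes p r :: "'a::idom poly"
  assumes "p dvd r" and "degree p = degree r" and "lead_coeff p = 1" and "lead_coeff r = 1"
  shows "p = r"
proof -
  obtain k where r: "r = p * k"
    using assms(1) by blast
  have "p \<noteq> 0" "k \<noteq> 0"
    using assms(3,4) r by auto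
  then have "degree k = 0"
    using assms(2) r by (simp add: degree_mult_eq)
  then obtain c where k: "k = [:c:]"
    by (elim degree_eq_zeroE)
  then have "c = 1"
    using assms(3,4) r \<open>k \<noteq> 0\<close> by (simp add: lead_coeff_mult)
  then show ?thesis
    using r k by simp
qed

lemma card_eq_mult_card_image:
  assumes "finite A" and "\<And>a. a \<in> A \<Longrightarrow> card {b \<in> A. f b = f a} = k"
  shows "card A = k * card (f ` A)"
proof -
  have "card A = (\<Sum>c\<in>f ` A. card {b \<in> A. f b = c})"
    using sum.image_gen[OF assms(1), of "\<lambda>_. 1::nat" f] by simp
  also have "\<dots> = (\<Sum>c\<in>f ` A. k)"
    using assms(2) by (intro sum.cong) auto
  finally show ?thesis
    by simp
qed

lemma coprime_mult_pred_succ_iff: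
  fixes Q e1 e2 :: int
  shows "coprime ((Q + 1) * e1 - e2) ((Q - 1) * (Q + 1)) \<longleftrightarrow>
    gcd (Q - 1) (2 * e1 - e2) = 1 \<and> gcd (Q + 1) e2 = 1"
proof -
  let ?x = "(Q + 1) * e1 - e2"
  have "gcd (Q - 1) ?x = gcd (Q - 1) (e1 * (Q - 1) + (2 * e1 - e2))"
    by (simp add: algebra_simps)
  also have "\<dots> = gcd (Q - 1) (2 * e1 - e2)"
    by (rule gcd_add_mult)
  finally have "gcd (Q - 1) ?x = gcd (Q - 1) (2 * e1 - e2)" .
  moreover have "gcd (Q + 1) ?x = gcd (Q + 1) (e1 * (Q + 1) + - e2)"
    by (simp add: algebra_simps)
  then have "gcd (Q + 1) ?x = gcd (Q + 1) e2"
    by (simp only: gcd_add_mult gcd_neg2)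
  ultimately show ?thesis
    unfolding coprime_mult_right_iff coprime_commute[of ?x] by (simp add: coprime_iff_gcd_eq_1)
qed

lemma coeff_sum_monom: "coeff (\<Sum>i<d. monom (c i) i) j = (if j < d then c j else 0)"
  by (simp add: coeff_sum coeff_monom)

lemma poly_eq_sum_monom:
  assumes "degree p < d"
  shows "p = (\<Sum>i<d. monom (coeff p i) i)"
  using assms by (auto simp: poly_eq_iff coeff_sum_monom intro: coeff_eq_0)

lemma degree_sum_monom_less:
  assumes "d > 0"
  shows "degree (\<Sum>i<d. monom (c i) i) < d"
proof -
  have "degree (\<Sum>i<d. monom (c i) i) \<le> d - 1"
    by (rule degree_le) (auto simp: coeff_sum_monom)
  then show ?thesis
    using assms by simp
qed

definition shifts :: "'a::comm_semiring_1 poly \<Rightarrow> nat \<Rightarrow> 'a poly set" where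
  "shifts g d = (\<lambda>i. monom 1 i * g) ` {..<d}"

lemma inj_on_shifts:
  fixes g :: "'a::idom poly"
  assumes "g \<noteq> 0"
  shows "inj_on (\<lambda>i. monom 1 i * g) A"
proof -
  have "degree (monom 1 i * g) = i + degree g" for i
    using assms by (simp add: degree_mult_eq degree_monom_eq)
  then show ?thesis
    by (intro inj_onI) (metis add_right_cancel)
qed

lemma card_shifts: "(g :: 'a::idom poly) \<noteq> 0 \<Longrightarrow> card (shifts g d) = d"
  by (simp add: shifts_def card_image inj_on_shifts)

lemma sum_smult_shifts:
  fixes g :: "'a::idom poly"
  assumes "g \<noteq> 0"
  shows "(\<Sum>b\<in>shifts g d. smult (c b) b) = (\<Sum>i<d. monom (c (monom 1 i * g)) i) * g"
  unfolding shifts_def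
  by (simp add: sum.reindex[OF inj_on_shifts[OF assms]] smult_monom_mult sum_distrib_right)

section \<open>The subfield F_q of F_{q^2} and the Frobenius map\<close>

text \<open>The type \<open>'a\<close> plays F_{q^2}, \<open>K\<close> its subfield F_q and \<open>frob\<close> the generator
  x \<mapsto> x^q of Gal(F_{q^2}/F_q).\<close>

locale Fq2 =
  fixes q :: nat and K :: "'a::{finite,field} set"
  assumes q_prime_power: "\<exists>p k. prime p \<and> k > 0 \<and> q = p ^ k"
    and card_field: "CARD('a) = q ^ 2"
  defines K_def: "K \<equiv> subfield_Fq q"
begin

definition frob :: "'a \<Rightarrow> 'a" where "frob x = x ^ q"

definition N :: nat where "N = q ^ 2 - 1"

lemma q_ge_2: "q \<ge> 2"
proof -
  obtain p k where "prime p" "k > 0" "q = p ^ k"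
    using q_prime_power by blast
  then show ?thesis
    using prime_ge_2_nat[of p] self_le_power[of p k] by simp
qed

lemma N_eq: "N = (q - 1) * (q + 1)"
  using q_ge_2 by (simp add: N_def power2_eq_square algebra_simps)

lemma int_N_eq: "int N = (int q - 1) * (int q + 1)"
  using q_ge_2 by (simp add: N_eq of_nat_diff algebra_simps)

lemma N_gt_q: "N > q"
proof -
  have "2 * q \<le> q * q"
    using q_ge_2 by simp
  then show ?thesis
    using q_ge_2 unfolding N_def power2_eq_square by linarith
qed

lemma power_N_eq_1: "(x::'a) \<noteq> 0 \<Longrightarrow> x ^ N = 1"
  using field_power_card_minus_one[of x] card_field by (simp add: N_def)

lemma frob_add: "frob (x + y) = frob x + frob y"
proof -
  obtain p k where p: "prime p" and q: "q = p ^ k"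
    using q_prime_power by blast
  have "CHAR('a) = p"
    using p card_field by (intro CHAR_eq_if_card_eq_prime_power) (simp_all add: q flip: power_mult)
  then show ?thesis
    unfolding frob_def using p q by (intro freshmans_dream') auto
qed

lemma frob_mult: "frob (x * y) = frob x * frob y"
  by (simp add: frob_def power_mult_distrib)

lemma frob_eq_0_iff [simp]: "frob x = 0 \<longleftrightarrow> x = 0"
  using q_ge_2 by (simp add: frob_def)

lemma frob_0 [simp]: "frob 0 = 0"
  by simp

lemma frob_uminus: "frob (- x) = - frob x"
  using frob_add[of x "- x"] by (simp add: eq_neg_iff_add_eq_0 add.commute)

lemma frob_diff: "frob (x - y) = frob x - frob y"
  using frob_add[of x "- y"] by (simp add: frob_uminus)

lemma frob_divide: "frob (x / y) = frob x / frob y"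
  by (simp add: frob_def power_divide)

lemma frob_1 [simp]: "frob 1 = 1"
  by (simp add: frob_def)

lemma frob_frob [simp]: "frob (frob x) = x"
  using field_power_card_eq_same[of x] card_field
  by (simp add: frob_def power2_eq_square flip: power_mult)

lemma mem_K_iff: "x \<in> K \<longleftrightarrow> frob x = x"
  by (simp add: K_def subfield_Fq_def frob_def)

lemma poly_over_K_iff: "poly_over K p \<longleftrightarrow> map_poly frob p = p"
  by (auto simp: poly_over_def poly_eq_iff coeff_map_poly mem_K_iff)

lemma map_poly_frob_mult: "map_poly frob (p * r) = map_poly frob p * map_poly frob r"
proof -
  have "frob (sum f A) = (\<Sum>i\<in>A. frob (f i))" for f :: "nat \<Rightarrow> 'a" and A
    by (induction A rule: infinite_finite_induct) (auto simp: frob_add)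
  then show ?thesis
    by (simp add: poly_eq_iff coeff_map_poly coeff_mult frob_mult)
qed

lemma map_poly_frob_linear [simp]: "map_poly frob [:- x, 1:] = [:- frob x, 1:]"
  by (simp add: poly_eq_iff coeff_map_poly coeff_pCons frob_uminus split: nat.split)

lemma poly_over_K_mult: "poly_over K p \<Longrightarrow> poly_over K r \<Longrightarrow> poly_over K (p * r)"
  by (simp add: poly_over_K_iff map_poly_frob_mult)

lemma poly_over_K_cancel:
  assumes "poly_over K (p * r)" and "poly_over K r" and "r \<noteq> 0"
  shows "poly_over K p"
  using assms by (simp add: poly_over_K_iff map_poly_frob_mult)

lemma minpoly_over_K_mem:
  assumes "x \<in> K"
  shows "minpoly_over K x = [:- x, 1:]"
proof (rule minpoly_over_eqI)
  show "a - b \<in> K" if "a \<in> K" "b \<in> K" for a b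
    using that by (simp add: mem_K_iff frob_diff)
  show "poly_over K [:- x, 1:]"
    using assms by (simp add: poly_over_K_iff mem_K_iff)
  show "degree [:- x, 1:] \<le> degree r" if "r \<noteq> 0" "poly r x = 0" for r
    using that by (cases "degree r = 0") (auto elim: degree_eq_zeroE)
qed simp_all

definition conj_poly :: "'a \<Rightarrow> 'a poly" where
  "conj_poly y = [:- y, 1:] * [:- frob y, 1:]"

lemma degree_conj_poly [simp]: "degree (conj_poly y) = 2"
  by (simp add: conj_poly_def)

lemma lead_coeff_conj_poly [simp]: "lead_coeff (conj_poly y) = 1"
  by (simp add: conj_poly_def lead_coeff_mult)

lemma poly_conj_poly_eq_0_iff: "poly (conj_poly y) z = 0 \<longleftrightarrow> z = y \<or> z = frob y"
  unfolding conj_poly_def poly_mult by simp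

lemma conj_poly_frob: "conj_poly (frob y) = conj_poly y"
  by (simp add: conj_poly_def mult.commute)

lemma poly_over_K_conj_poly: "poly_over K (conj_poly y)"
  unfolding poly_over_K_iff conj_poly_def map_poly_frob_mult map_poly_frob_linear frob_frob
  by (rule mult.commute)

lemma minpoly_over_K_not_mem:
  assumes "y \<notin> K"
  shows "minpoly_over K y = conj_poly y"
proof (rule minpoly_over_eqI)
  show "a - b \<in> K" if "a \<in> K" "b \<in> K" for a b
    using that by (simp add: mem_K_iff frob_diff)
  show "degree (conj_poly y) \<le> degree r" if r: "poly_over K r" "r \<noteq> 0" "poly r y = 0" for r
  proof (rule ccontr)
    assume "\<not> ?thesis"
    then have "degree r \<le> 1"
      by simp
    define a0 a1 where "a0 = coeff r 0" and "a1 = coeff r 1"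
    have r_eq: "r = [:a0, a1:]"
      using \<open>degree r \<le> 1\<close>
      by (auto simp: a0_def a1_def poly_eq_iff coeff_pCons coeff_eq_0 split: nat.split)
    then have "a0 + y * a1 = 0"
      using r(3) by simp
    moreover have "a1 \<noteq> 0"
      using r(2) r_eq calculation by auto
    ultimately have "y = - a0 / a1"
      by (simp add: field_simps eq_neg_iff_add_eq_0)
    moreover have "a0 \<in> K" "a1 \<in> K"
      using r(1) by (simp_all add: a0_def a1_def poly_over_def)
    ultimately show False
      using assms by (simp add: mem_K_iff frob_divide frob_uminus)
  qed
qed (simp_all only: lead_coeff_conj_poly poly_over_K_conj_poly poly_conj_poly_eq_0_iff simp_thms)

lemma zero_mem_K: "0 \<in> K" and one_mem_K: "1 \<in> K"
  by (simp_all add: mem_K_iff)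

lemma poly_over_K_monom: "c \<in> K \<Longrightarrow> poly_over K (monom c i)"
  by (simp add: poly_over_def coeff_monom zero_mem_K)

section \<open>Cyclic codes with parity-check polynomial (X - x)(X - y)(X - y^q)\<close>

definition multiples :: "'a poly \<Rightarrow> nat \<Rightarrow> 'a poly set" where
  "multiples g n = {c. poly_over K c \<and> degree c < n \<and> g dvd c}"

context
  fixes g :: "'a poly" and d :: nat
  assumes g: "poly_over K g" "g \<noteq> 0" and d: "d > 0"
begin

lemma mult_mem_multiples:
  assumes "poly_over K w" and "degree w < d"
  shows "w * g \<in> multiples g (degree g + d)"
proof -
  have "degree (w * g) < degree g + d"
    using assms(2) g(2) d by (cases "w = 0") (simp_all add: degree_mult_eq)
  then show ?thesis
    using assms(1) g(1) by (simp add: multiples_def poly_over_K_mult)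
qed

lemma shifts_subset_multiples: "shifts g d \<subseteq> multiples g (degree g + d)"
  using mult_mem_multiples one_mem_K by (auto simp: shifts_def poly_over_K_monom degree_monom_eq)

lemma K_span_shifts_subset: "K_span K (shifts g d) \<subseteq> multiples g (degree g + d)"
proof
  fix c assume "c \<in> K_span K (shifts g d)"
  then obtain cf where cf: "\<forall>b\<in>shifts g d. cf b \<in> K" and c: "c = (\<Sum>b\<in>shifts g d. smult (cf b) b)"
    unfolding K_span_def by blast
  have "poly_over K (\<Sum>i<d. monom (cf (monom 1 i * g)) i)"
    using cf zero_mem_K by (simp add: poly_over_def coeff_sum_monom shifts_def)
  then show "c \<in> multiples g (degree g + d)"
    unfolding c sum_smult_shifts[OF g(2)]
    by (rule mult_mem_multiples[OF _ degree_sum_monom_less[OF d]])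
qed

lemma multiples_subset_K_span_shifts: "multiples g (degree g + d) \<subseteq> K_span K (shifts g d)"
proof
  fix c assume "c \<in> multiples g (degree g + d)"
  then have "poly_over K c" "degree c < degree g + d" "g dvd c"
    by (auto simp: multiples_def)
  then obtain v where c: "c = v * g"
    by (metis dvdE mult.commute)
  have "poly_over K v"
    using poly_over_K_cancel[of v g] \<open>poly_over K c\<close> c g by simp
  have "degree v < d"
    using \<open>degree c < degree g + d\<close> d g(2) by (cases "v = 0") (auto simp: c degree_mult_eq)
  define cf where "cf b = coeff v (inv_into {..<d} (\<lambda>i. monom 1 i * g) b)" for b
  have "(\<Sum>b\<in>shifts g d. smult (cf b) b) = (\<Sum>i<d. monom (coeff v i) i) * g"
    unfolding sum_smult_shifts[OF g(2)] cf_def using inv_into_f_f[OF inj_on_shifts[OF g(2)]] by simp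
  also have "\<dots> = c"
    using poly_eq_sum_monom[OF \<open>degree v < d\<close>] c by simp
  finally have "c = (\<Sum>b\<in>shifts g d. smult (cf b) b)" ..
  moreover have "\<forall>b\<in>shifts g d. cf b \<in> K"
    using \<open>poly_over K v\<close> by (simp add: cf_def poly_over_def)
  ultimately show "c \<in> K_span K (shifts g d)"
    unfolding K_span_def by blast
qed

lemma K_independent_shifts: "K_independent K (shifts g d)"
  unfolding K_independent_def
proof (intro allI impI ballI)
  fix cf b assume "(\<forall>b\<in>shifts g d. cf b \<in> K) \<and> (\<Sum>b\<in>shifts g d. smult (cf b) b) = 0"
    and "b \<in> shifts g d"
  then have "(\<Sum>i<d. monom (cf (monom 1 i * g)) i) = 0"
    using g(2) by (simp add: sum_smult_shifts)
  moreover obtain i where "i < d" "b = monom 1 i * g"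
    using \<open>b \<in> shifts g d\<close> by (auto simp: shifts_def)
  ultimately show "cf b = 0"
    by (metis coeff_0 coeff_sum_monom)
qed

lemma K_dim_eq_multiples: "K_dim_eq K (multiples g (degree g + d)) d"
  unfolding K_dim_eq_def
  using card_shifts[OF g(2)] shifts_subset_multiples K_independent_shifts
    K_span_shifts_subset multiples_subset_K_span_shifts
  by (intro exI[of _ "shifts g d"]) (auto simp: shifts_def)

end

definition check_poly :: "'a \<Rightarrow> 'a \<Rightarrow> 'a poly" where
  "check_poly x y = [:- x, 1:] * conj_poly y"

lemma minpoly_over_mult_eq_check_poly:
  "x \<in> K \<Longrightarrow> y \<notin> K \<Longrightarrow> minpoly_over K x * minpoly_over K y = check_poly x y"
  by (simp add: minpoly_over_K_mem minpoly_over_K_not_mem check_poly_def)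

lemma degree_check_poly [simp]: "degree (check_poly x y) = 3"
proof -
  have "conj_poly y \<noteq> 0"
    using degree_conj_poly[of y] by (metis degree_0 zero_neq_numeral)
  then show ?thesis
    by (simp add: check_poly_def degree_mult_eq del: mult_pCons_left)
qed

lemma lead_coeff_check_poly [simp]: "lead_coeff (check_poly x y) = 1"
  unfolding check_poly_def lead_coeff_mult lead_coeff_conj_poly by simp

lemma check_poly_nonzero [simp]: "check_poly x y \<noteq> 0"
  using lead_coeff_check_poly[of x y] by auto

lemma poly_check_poly_eq_0_iff: "poly (check_poly x y) z = 0 \<longleftrightarrow> z = x \<or> z = y \<or> z = frob y"
  unfolding check_poly_def poly_mult by (simp add: poly_conj_poly_eq_0_iff)

lemma check_poly_frob: "check_poly x (frob y) = check_poly x y"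
  by (simp add: check_poly_def conj_poly_frob)

lemma poly_over_K_check_poly: "x \<in> K \<Longrightarrow> poly_over K (check_poly x y)"
  unfolding check_poly_def
  by (intro poly_over_K_mult poly_over_K_conj_poly) (simp add: poly_over_K_iff mem_K_iff)

lemma check_poly_eqD:
  assumes "check_poly x y = check_poly x' y'" and "x \<in> K" "y \<notin> K" "x' \<in> K" "y' \<notin> K"
  shows "x' = x \<and> (y' = y \<or> y' = frob y)"
proof -
  have "poly (check_poly x y) x' = 0" "poly (check_poly x y) y' = 0"
    unfolding assms(1) by (simp_all add: poly_check_poly_eq_0_iff)
  then show ?thesis
    using assms(2-5) by (auto simp: poly_check_poly_eq_0_iff mem_K_iff)
qed

lemma degree_X_pow_N_minus_1: "degree (monom 1 N - 1 :: 'a poly) = N"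
proof -
  have "monom 1 N - 1 = monom (1::'a) N + (- 1)"
    by simp
  also have "degree \<dots> = N"
    using N_gt_q by (subst degree_add_eq_left) (simp_all add: degree_monom_eq)
  finally show ?thesis .
qed

lemma poly_over_K_X_pow_N_minus_1: "poly_over K (monom 1 N - 1)"
  by (simp add: poly_over_def coeff_monom coeff_1 mem_K_iff frob_uminus)

lemma lead_coeff_X_pow_N_minus_1: "lead_coeff (monom 1 N - 1 :: 'a poly) = 1"
  using N_gt_q q_ge_2 by (simp add: degree_X_pow_N_minus_1)

lemma check_poly_dvd_X_pow_N_minus_1:
  assumes "x \<in> K" "x \<noteq> 0" "y \<notin> K"
  shows "check_poly x y dvd monom 1 N - 1"
proof -
  have distinct: "y \<noteq> x" "frob y \<noteq> x" "frob y \<noteq> y"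
    using assms by (auto simp: mem_K_iff)
  have "check_poly x y = (\<Prod>a\<in>{x, y, frob y}. [:- a, 1:])"
    using distinct by (simp add: check_poly_def conj_poly_def mult.assoc del: mult_pCons_left)
  also have "\<dots> dvd monom 1 N - 1"
  proof (rule linear_factors_dvd_if_roots)
    show "poly (monom 1 N - 1) a = 0" if "a \<in> {x, y, frob y}" for a
      using that assms zero_mem_K by (auto simp: poly_monom mem_K_iff intro!: power_N_eq_1)
  qed simp
  finally show ?thesis .
qed

definition gen_poly :: "'a \<Rightarrow> 'a \<Rightarrow> 'a poly" where
  "gen_poly x y = (monom 1 N - 1) div check_poly x y"

definition code :: "'a \<Rightarrow> 'a \<Rightarrow> 'a poly set" where
  "code x y = cyclic_code_check K N (check_poly x y)"

lemma code_eq_multiples: "code x y = multiples (gen_poly x y) N"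
  by (simp add: code_def cyclic_code_check_def gen_poly_def multiples_def)

context
  fixes x y
  assumes x: "x \<in> K" "x \<noteq> 0" and y: "y \<notin> K"
begin

lemma gen_poly_mult_check_poly: "gen_poly x y * check_poly x y = monom 1 N - 1"
  using check_poly_dvd_X_pow_N_minus_1[OF x y] by (simp add: gen_poly_def)

lemma gen_poly_nonzero: "gen_poly x y \<noteq> 0"
  using gen_poly_mult_check_poly degree_X_pow_N_minus_1 N_gt_q by (metis degree_0 mult_zero_left not_less0)

lemma degree_gen_poly: "degree (gen_poly x y) = N - 3"
proof -
  have "N = degree (gen_poly x y) + 3"
    using gen_poly_mult_check_poly gen_poly_nonzero degree_X_pow_N_minus_1
    by (metis degree_check_poly degree_mult_eq lead_coeff_check_poly leading_coeff_0_iff zero_neq_one)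
  then show ?thesis
    by simp
qed

lemma lead_coeff_gen_poly: "lead_coeff (gen_poly x y) = 1"
  using gen_poly_mult_check_poly lead_coeff_X_pow_N_minus_1
  by (metis lead_coeff_check_poly lead_coeff_mult mult_1_right)

lemma poly_over_K_gen_poly: "poly_over K (gen_poly x y)"
proof (rule poly_over_K_cancel)
  show "poly_over K (gen_poly x y * check_poly x y)"
    by (simp add: gen_poly_mult_check_poly poly_over_K_X_pow_N_minus_1)
qed (use x in \<open>simp_all add: poly_over_K_check_poly\<close>)

lemma gen_poly_mem_code: "gen_poly x y \<in> code x y"
  using poly_over_K_gen_poly degree_gen_poly N_gt_q by (simp add: code_eq_multiples multiples_def)

lemma K_dim_eq_code: "K_dim_eq K (code x y) 3"
proof -
  have "N = degree (gen_poly x y) + 3"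
    using degree_gen_poly N_gt_q q_ge_2 by simp
  then show ?thesis
    using K_dim_eq_multiples[OF poly_over_K_gen_poly gen_poly_nonzero, of 3]
    by (simp add: code_eq_multiples)
qed

end

lemma check_poly_eq_if_code_eq:
  assumes "x \<in> K" "x \<noteq> 0" "y \<notin> K" and "x' \<in> K" "x' \<noteq> 0" "y' \<notin> K"
    and "code x y = code x' y'"
  shows "check_poly x y = check_poly x' y'"
proof -
  have "gen_poly x y \<in> code x' y'"
    using gen_poly_mem_code[OF assms(1-3)] assms(7) by simp
  then have "gen_poly x' y' dvd gen_poly x y"
    by (simp add: code_eq_multiples multiples_def)
  then have "gen_poly x' y' = gen_poly x y"
    using degree_gen_poly[OF assms(1-3)] degree_gen_poly[OF assms(4-6)]
      lead_coeff_gen_poly[OF assms(1-3)] lead_coeff_gen_poly[OF assms(4-6)]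
    by (intro monic_eq_if_dvd) simp_all
  then show ?thesis
    using gen_poly_mult_check_poly[OF assms(1-3)] gen_poly_mult_check_poly[OF assms(4-6)]
      gen_poly_nonzero[OF assms(1-3)] by (metis mult_left_cancel)
qed

section \<open>Primitive elements\<close>

lemma coprime_q_N: "coprime q N"
proof -
  have "q * q = N + 1"
    using q_ge_2 by (simp add: N_def power2_eq_square)
  moreover have "coprime (N + 1) N"
    by simp
  ultimately show ?thesis
    by (metis coprime_mult_left_iff)
qed

lemma power_int_mem_K:
  assumes "x \<noteq> 0" and "(int q + 1) dvd z"
  shows "x powi z \<in> K"
proof -
  obtain t where z: "z = (int q + 1) * t"
    using assms(2) by blast
  have "z * int q = z + int N * t"
    using q_ge_2 by (simp add: z N_eq of_nat_diff algebra_simps)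
  then have "frob (x powi z) = x powi (z + int N * t)"
    by (simp only: frob_def power_int_power')
  also have "\<dots> = x powi z * (x powi int N) powi t"
    using assms(1) by (simp only: power_int_add power_int_mult simp_thms)
  also have "\<dots> = x powi z"
    using power_N_eq_1[OF assms(1)] by simp
  finally show ?thesis
    by (simp add: mem_K_iff)
qed

context
  fixes \<zeta> :: 'a
  assumes \<zeta>: "primitive_element \<zeta>"
begin

lemma primitive_element_nonzero: "\<zeta> \<noteq> 0"
proof
  assume "\<zeta> = 0"
  have "x \<in> {0, 1}" for x :: 'a
  proof (cases "x = 0")
    case False
    then obtain k where "x = \<zeta> ^ k"
      using \<zeta> unfolding primitive_element_def by blast
    then show ?thesis
      using \<open>\<zeta> = 0\<close> by (simp add: power_0_left)
  qed simp
  then have "UNIV \<subseteq> {0, 1 :: 'a}"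
    by blast
  then have "CARD('a) \<le> 2"
    using card_mono[of "{0, 1 :: 'a}" UNIV] by simp
  then show False
    using card_field q_ge_2 power_mono[of 2 q 2] by simp
qed

lemma bij_betw_primitive_power: "bij_betw (\<lambda>i. \<zeta> ^ i) {..<N} (UNIV - {0})"
proof -
  have "(\<lambda>i. \<zeta> ^ i) ` {..<N} = UNIV - {0}"
  proof
    show "UNIV - {0} \<subseteq> (\<lambda>i. \<zeta> ^ i) ` {..<N}"
    proof
      fix x :: 'a assume "x \<in> UNIV - {0}"
      then obtain j where "x = \<zeta> ^ j"
        using \<zeta> unfolding primitive_element_def by blast
      then have "x = \<zeta> ^ (j mod N)"
        using power_eq_power_mod[OF power_N_eq_1[OF primitive_element_nonzero]] by simp
      moreover have "j mod N < N"
        using N_gt_q by simp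
      ultimately show "x \<in> (\<lambda>i. \<zeta> ^ i) ` {..<N}"
        by blast
    qed
  qed (use primitive_element_nonzero in auto)
  moreover have "card (UNIV - {0 :: 'a}) = card {..<N}"
    using card_field by (simp add: card_Diff_singleton N_def)
  ultimately show ?thesis
    by (simp add: bij_betw_def eq_card_imp_inj_on)
qed

lemma primitive_power_eq_iff: "\<zeta> ^ i = \<zeta> ^ j \<longleftrightarrow> i mod N = j mod N"
proof -
  have "\<zeta> ^ i = \<zeta> ^ (i mod N)" "\<zeta> ^ j = \<zeta> ^ (j mod N)"
    using power_eq_power_mod[OF power_N_eq_1[OF primitive_element_nonzero]] by simp_all
  moreover have "i mod N < N" "j mod N < N"
    using N_gt_q by simp_all
  ultimately show ?thesis
    using bij_betw_primitive_power by (auto simp: bij_betw_def dest: inj_onD)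
qed

lemma primitive_element_power_iff: "primitive_element (\<zeta> ^ c) \<longleftrightarrow> coprime c N"
proof
  assume "primitive_element (\<zeta> ^ c)"
  then obtain k where "\<zeta> ^ 1 = (\<zeta> ^ c) ^ k"
    using primitive_element_nonzero unfolding primitive_element_def by auto
  then have "Suc 0 mod N = c * k mod N"
    unfolding power_mult[symmetric] primitive_power_eq_iff by simp
  then have "[c * k = Suc 0] (mod N)"
    by (simp add: cong_def)
  then show "coprime c N"
    using coprime_iff_invertible_nat by blast
next
  assume "coprime c N"
  then obtain k where k: "[c * k = Suc 0] (mod N)"
    using coprime_iff_invertible_nat by blast
  show "primitive_element (\<zeta> ^ c)"
    unfolding primitive_element_def
  proof (intro allI impI)
    fix x :: 'a assume "x \<noteq> 0"
    then obtain j where "x = \<zeta> ^ j"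
      using \<zeta> unfolding primitive_element_def by blast
    moreover have "\<zeta> ^ j = (\<zeta> ^ c) ^ (k * j)"
    proof -
      have "c * (k * j) mod N = (c * k mod N) * j mod N"
        by (simp add: mod_mult_left_eq mult.assoc)
      also have "\<dots> = j mod N"
        using k by (simp add: cong_def mod_mult_left_eq)
      finally show ?thesis
        unfolding power_mult[symmetric] primitive_power_eq_iff by simp
    qed
    ultimately show "\<exists>m. x = (\<zeta> ^ c) ^ m"
      by blast
  qed
qed

lemma primitive_element_power_int_iff: "primitive_element (\<zeta> powi z) \<longleftrightarrow> coprime z (int N)"
proof -
  have "\<zeta> powi z = \<zeta> ^ nat (z mod int N)"
    using power_int_eq_power_mod[OF power_N_eq_1[OF primitive_element_nonzero], of z] N_gt_q
    by simp
  moreover have "coprime (nat (z mod int N)) N \<longleftrightarrow> coprime z (int N)"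
    using N_gt_q by (simp add: coprime_int_iff[symmetric])
  ultimately show ?thesis
    by (simp add: primitive_element_power_iff)
qed

lemma primitive_element_frob: "primitive_element (frob \<zeta>)"
  unfolding frob_def using coprime_q_N by (simp add: primitive_element_power_iff)

lemma primitive_element_not_mem_K: "\<zeta> \<notin> K"
proof
  assume "\<zeta> \<in> K"
  then have "\<zeta> ^ q = \<zeta> ^ 1"
    by (simp add: mem_K_iff frob_def)
  then have "q mod N = 1 mod N"
    by (simp only: primitive_power_eq_iff)
  then show False
    using N_gt_q q_ge_2 by simp
qed

end

section \<open>Counting the codes\<close>

definition code_pairs :: "('a \<times> 'a) set" where
  "code_pairs = {(x, y). x \<in> K - {0} \<and> primitive_element (y / x)}"

lemma code_pairsD:
  assumes "(x, y) \<in> code_pairs"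
  shows "x \<in> K" "x \<noteq> 0" "y \<notin> K"
proof -
  show "x \<in> K" "x \<noteq> 0"
    using assms by (auto simp: code_pairs_def)
  show "y \<notin> K"
  proof
    assume "y \<in> K"
    then have "y / x \<in> K"
      using \<open>x \<in> K\<close> by (simp add: mem_K_iff frob_divide)
    then show False
      using assms primitive_element_not_mem_K by (auto simp: code_pairs_def)
  qed
qed

lemma code_pairs_frob:
  assumes "(x, y) \<in> code_pairs"
  shows "(x, frob y) \<in> code_pairs"
proof -
  have "frob y / x = frob (y / x)"
    using code_pairsD(1)[OF assms] by (simp add: mem_K_iff frob_divide)
  then show ?thesis
    using assms primitive_element_frob by (auto simp: code_pairs_def)
qed

lemma code_pairs_fibre:
  assumes "(x, y) \<in> code_pairs"
  shows "{t \<in> code_pairs. case_prod code t = code x y} = {(x, y), (x, frob y)}"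
proof -
  note xy = code_pairsD[OF assms]
  have "t \<in> {(x, y), (x, frob y)}" if "t \<in> code_pairs" "case_prod code t = code x y" for t
  proof -
    obtain x' y' where t: "t = (x', y')"
      by force
    note xy' = code_pairsD[OF that(1)[unfolded t]]
    have "check_poly x y = check_poly x' y'"
      using that(2) xy xy' by (intro check_poly_eq_if_code_eq) (simp_all add: t)
    then show ?thesis
      using check_poly_eqD xy xy' t by auto
  qed
  moreover have "code x (frob y) = code x y"
    by (simp add: code_def check_poly_frob)
  ultimately show ?thesis
    using assms code_pairs_frob[OF assms] by auto
qed

lemma card_code_pairs_eq_double: "card code_pairs = 2 * card (case_prod code ` code_pairs)"
proof (rule card_eq_mult_card_image)
  fix t assume "t \<in> code_pairs"
  then obtain x y where t: "t = (x, y)" and "(x, y) \<in> code_pairs"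
    by (cases t) auto
  moreover have "frob y \<noteq> y"
    using code_pairsD(3)[OF \<open>(x, y) \<in> code_pairs\<close>] by (simp add: mem_K_iff)
  ultimately show "card {b \<in> code_pairs. case_prod code b = case_prod code t} = 2"
    by (simp add: code_pairs_fibre)
qed simp

end

locale Fq2_primitive = Fq2 q K for q :: nat and K :: "'a::{finite,field} set" +
  fixes \<gamma> :: 'a
  assumes gamma_primitive: "primitive_element \<gamma>"
begin

lemma card_primitive_elements: "card {\<zeta> :: 'a. primitive_element \<zeta>} = totient N"
proof -
  have primitive_eq: "{\<zeta>. primitive_element \<zeta>} = (\<lambda>i. \<gamma> ^ i) ` {i \<in> {..<N}. coprime i N}"
  proof
    show "{\<zeta>. primitive_element \<zeta>} \<subseteq> (\<lambda>i. \<gamma> ^ i) ` {i \<in> {..<N}. coprime i N}"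
    proof
      fix \<zeta> :: 'a assume "\<zeta> \<in> {\<zeta>. primitive_element \<zeta>}"
      then have prim: "primitive_element \<zeta>"
        by simp
      then have "\<zeta> \<in> UNIV - {0}"
        using primitive_element_nonzero[of \<zeta>] by simp
      then obtain i where "i < N" "\<zeta> = \<gamma> ^ i"
        using bij_betw_primitive_power[OF gamma_primitive] by (auto simp: bij_betw_def)
      with prim show "\<zeta> \<in> (\<lambda>i. \<gamma> ^ i) ` {i \<in> {..<N}. coprime i N}"
        using primitive_element_power_iff[OF gamma_primitive] by auto
    qed
  qed (use primitive_element_power_iff[OF gamma_primitive] in auto)
  have totatives_eq: "{i \<in> {..<N}. coprime i N} = totatives N"
  proof -
    have "N > 1"
      using N_gt_q q_ge_2 by simp
    then have "i > 0" if "coprime i N" for i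
      using that by (cases i) auto
    then show ?thesis
      using \<open>N > 1\<close> by (auto simp: in_totatives_iff intro: totatives_less)
  qed
  have inj: "inj_on (\<lambda>i. \<gamma> ^ i) {i \<in> {..<N}. coprime i N}"
    using bij_betw_primitive_power[OF gamma_primitive] by (auto simp: bij_betw_def intro: inj_on_subset)
  have "card {\<zeta> :: 'a. primitive_element \<zeta>} = card ((\<lambda>i. \<gamma> ^ i) ` {i \<in> {..<N}. coprime i N})"
    using primitive_eq by (rule arg_cong)
  also have "\<dots> = card {i \<in> {..<N}. coprime i N}"
    by (rule card_image[OF inj])
  also have "\<dots> = totient N"
    by (simp only: totatives_eq totient_def)
  finally show ?thesis .
qed

lemma nonzero_K_eq: "K - {0} = (\<lambda>a. \<gamma> ^ ((q + 1) * a)) ` {..<q - 1}"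
proof
  show "(\<lambda>a. \<gamma> ^ ((q + 1) * a)) ` {..<q - 1} \<subseteq> K - {0}"
  proof (rule image_subsetI)
    fix a
    have "int ((q + 1) * a) = (int q + 1) * int a"
      by (simp add: algebra_simps)
    then have "(int q + 1) dvd int ((q + 1) * a)"
      by simp
    from power_int_mem_K[OF primitive_element_nonzero[OF gamma_primitive] this]
    have "\<gamma> ^ ((q + 1) * a) \<in> K"
      by (simp only: power_int_of_nat)
    then show "\<gamma> ^ ((q + 1) * a) \<in> K - {0}"
      using primitive_element_nonzero[OF gamma_primitive] by simp
  qed
  show "K - {0} \<subseteq> (\<lambda>a. \<gamma> ^ ((q + 1) * a)) ` {..<q - 1}"
  proof
    fix x assume x: "x \<in> K - {0}"
    then obtain j where "j < N" and j: "x = \<gamma> ^ j"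
      using bij_betw_primitive_power[OF gamma_primitive] by (auto simp: bij_betw_def)
    have "\<gamma> ^ (j * q) = \<gamma> ^ j"
      using x by (simp add: j mem_K_iff frob_def power_mult)
    then have "(j * q) mod N = j mod N"
      by (simp only: primitive_power_eq_iff[OF gamma_primitive])
    then have "N dvd j * q - j"
      using q_ge_2 by (subst (asm) mod_eq_dvd_iff_nat) simp_all
    then have "(q - 1) * (q + 1) dvd (q - 1) * j"
      by (simp add: N_eq diff_mult_distrib2 mult.commute)
    then have "q + 1 dvd j"
      using q_ge_2 by (simp only: nat_mult_dvd_cancel_disj) simp
    then obtain a where a: "j = (q + 1) * a"
      by blast
    have "(q + 1) * a < (q + 1) * (q - 1)"
      using \<open>j < N\<close> a by (simp only: N_eq mult.commute[of "q - 1"])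
    then have "a < q - 1"
      by (rule mult_less_cancel1[THEN iffD1, THEN conjunct2])
    then show "x \<in> (\<lambda>a. \<gamma> ^ ((q + 1) * a)) ` {..<q - 1}"
      using j a by blast
  qed
qed

lemma card_nonzero_K: "card (K - {0}) = q - 1"
proof -
  have "inj_on (\<lambda>a. \<gamma> ^ ((q + 1) * a)) {..<q - 1}"
  proof (rule inj_onI)
    fix a b assume "a \<in> {..<q - 1}" "b \<in> {..<q - 1}" "\<gamma> ^ ((q + 1) * a) = \<gamma> ^ ((q + 1) * b)"
    moreover have "(q + 1) * a < N" if "a < q - 1" for a
      using that mult_strict_left_mono[of a "q - 1" "q + 1"] by (simp add: N_eq mult.commute)
    ultimately have "(q + 1) * a = (q + 1) * b"
      by (simp only: primitive_power_eq_iff[OF gamma_primitive] mod_less lessThan_iff)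
    then show "a = b"
      by (rule mult_left_cancel[THEN iffD1, rotated]) simp
  qed
  then show ?thesis
    by (simp add: nonzero_K_eq card_image)
qed

lemma card_code_pairs: "card code_pairs = (q - 1) * totient N"
proof -
  have "bij_betw (\<lambda>(x, \<zeta>). (x, x * \<zeta>)) ((K - {0}) \<times> {\<zeta>. primitive_element \<zeta>}) code_pairs"
    by (rule bij_betw_byWitness[where f' = "\<lambda>(x, y). (x, y / x)"]) (auto simp: code_pairs_def)
  then have "card code_pairs = card (K - {0}) * card {\<zeta> :: 'a. primitive_element \<zeta>}"
    by (simp only: bij_betw_same_card[symmetric] card_cartesian_product)
  then show ?thesis
    by (simp add: card_nonzero_K card_primitive_elements)
qed

lemma code_pair_of_exponents:
  assumes "gcd (int q - 1) (2 * e1 - e2) = 1" and "gcd (int q + 1) e2 = 1"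
  shows "(\<gamma> powi (- ((int q + 1) * e1)), \<gamma> powi (- e2)) \<in> code_pairs"
proof -
  let ?x = "\<gamma> powi (- ((int q + 1) * e1))"
  have "\<gamma> \<noteq> 0"
    by (rule primitive_element_nonzero[OF gamma_primitive])
  then have "?x \<in> K" and "?x \<noteq> 0"
    by (simp_all add: power_int_mem_K)
  moreover have "\<gamma> powi (- e2) / ?x = \<gamma> powi ((int q + 1) * e1 - e2)"
    using \<open>\<gamma> \<noteq> 0\<close> power_int_diff[of \<gamma> "- e2" "- ((int q + 1) * e1)"] by simp
  moreover have "coprime ((int q + 1) * e1 - e2) (int N)"
    using assms by (simp only: int_N_eq coprime_mult_pred_succ_iff simp_thms)
  then have "primitive_element (\<gamma> powi ((int q + 1) * e1 - e2))"
    by (simp add: primitive_element_power_int_iff[OF gamma_primitive])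
  ultimately show ?thesis
    by (simp add: code_pairs_def)
qed

lemma exponents_of_code_pair:
  assumes "(x, y) \<in> code_pairs"
  obtains e1 e2 :: int
  where "gcd (int q - 1) (2 * e1 - e2) = 1" and "gcd (int q + 1) e2 = 1"
    and "x = \<gamma> powi (- ((int q + 1) * e1))" and "y = \<gamma> powi (- e2)"
proof -
  have "x \<in> K - {0}" and prim: "primitive_element (y / x)"
    using assms by (auto simp: code_pairs_def)
  then obtain a where x: "x = \<gamma> ^ ((q + 1) * a)"
    using nonzero_K_eq by blast
  have "y / x \<in> (\<lambda>i. \<gamma> ^ i) ` {..<N}"
    using bij_betw_primitive_power[OF gamma_primitive] primitive_element_nonzero[OF prim]
    by (simp add: bij_betw_def)
  then obtain c where c: "y / x = \<gamma> ^ c"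
    by blast
  have "coprime c N"
    using prim by (simp add: c primitive_element_power_iff[OF gamma_primitive])
  have y: "y = \<gamma> ^ (c + (q + 1) * a)"
    using c \<open>x \<in> K - {0}\<close> by (simp add: x power_add field_simps)
  show thesis
  proof (rule that)
    have "(int q + 1) * - int a - - int (c + (q + 1) * a) = int c"
      by (simp add: algebra_simps)
    then have "coprime ((int q + 1) * - int a - - int (c + (q + 1) * a)) ((int q - 1) * (int q + 1))"
      using \<open>coprime c N\<close> by (simp add: int_N_eq[symmetric])
    then show "gcd (int q - 1) (2 * - int a - - int (c + (q + 1) * a)) = 1"
      and "gcd (int q + 1) (- int (c + (q + 1) * a)) = 1"
      by (simp_all only: coprime_mult_pred_succ_iff)
    have "- ((int q + 1) * - int a) = int ((q + 1) * a)"
      by (simp add: algebra_simps)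
    then show "x = \<gamma> powi (- ((int q + 1) * - int a))"
      by (simp only: x power_int_of_nat)
    show "y = \<gamma> powi (- (- int (c + (q + 1) * a)))"
      by (simp only: y minus_minus power_int_of_nat)
  qed
qed

lemma codes_eq_image_code_pairs:
  "{C. \<exists>e1 e2::int. gcd (int q - 1) (2 * e1 - e2) = 1 \<and> gcd (int q + 1) e2 = 1 \<and>
      C = cyclic_code_check K N
            (minpoly_over K (\<gamma> powi (- ((int q + 1) * e1))) * minpoly_over K (\<gamma> powi (- e2))) \<and>
      K_dim_eq K C 3}
   = case_prod code ` code_pairs" (is "?S = _")
proof
  show "?S \<subseteq> case_prod code ` code_pairs"
  proof
    fix C assume "C \<in> ?S"
    then obtain e1 e2 :: int where "gcd (int q - 1) (2 * e1 - e2) = 1" "gcd (int q + 1) e2 = 1"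
      and C: "C = cyclic_code_check K N
        (minpoly_over K (\<gamma> powi (- ((int q + 1) * e1))) * minpoly_over K (\<gamma> powi (- e2)))"
      by (elim CollectE exE conjE) (rule that)
    then have t: "(\<gamma> powi (- ((int q + 1) * e1)), \<gamma> powi (- e2)) \<in> code_pairs"
      by (intro code_pair_of_exponents)
    then have "C = case_prod code (\<gamma> powi (- ((int q + 1) * e1)), \<gamma> powi (- e2))"
      using code_pairsD[OF t] by (simp add: C minpoly_over_mult_eq_check_poly code_def)
    then show "C \<in> case_prod code ` code_pairs"
      using t by blast
  qed
  show "case_prod code ` code_pairs \<subseteq> ?S"
  proof
    fix C assume "C \<in> case_prod code ` code_pairs"
    then obtain x y where t: "(x, y) \<in> code_pairs" and C: "C = code x y"
      by auto
    obtain e1 e2 where "gcd (int q - 1) (2 * e1 - e2) = 1" "gcd (int q + 1) e2 = 1"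
      and x: "x = \<gamma> powi (- ((int q + 1) * e1))" and y: "y = \<gamma> powi (- e2)"
      using exponents_of_code_pair[OF t] .
    moreover have "code x y = cyclic_code_check K N
        (minpoly_over K (\<gamma> powi (- ((int q + 1) * e1))) * minpoly_over K (\<gamma> powi (- e2)))"
      using code_pairsD[OF t] by (simp add: minpoly_over_mult_eq_check_poly code_def flip: x y)
    ultimately show "C \<in> ?S"
      using K_dim_eq_code[OF code_pairsD[OF t]] unfolding C mem_Collect_eq
      by (rule_tac exI[of _ e1], rule_tac exI[of _ e2]) (intro conjI; assumption)
  qed
qed

end

theorem theorem4:
  fixes q :: nat and \<gamma> :: "'a::{finite,field}"
  assumes q_pp: "\<exists>p k. prime p \<and> k > 0 \<and> q = p ^ k"
    and card: "CARD('a) = q ^ 2"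
    and prim: "primitive_element \<gamma>"
  defines "Fq \<equiv> subfield_Fq q :: 'a set"
    and "n \<equiv> q ^ 2 - 1"
    and "h \<equiv> (\<lambda>a::int. minpoly_over (subfield_Fq q) (\<gamma> powi (- a)))"
  shows "real (card {C. \<exists>e1 e2::int.
              gcd (int q - 1) (2 * e1 - e2) = 1 \<and> gcd (int q + 1) e2 = 1 \<and>
              C = cyclic_code_check Fq n (h ((int q + 1) * e1) * h e2) \<and>
              K_dim_eq Fq C 3})
         = real (totient (q ^ 2 - 1) * (q - 1)) / 2"
proof -
  interpret Fq2_primitive q Fq \<gamma>
    using q_pp card prim by unfold_locales (simp_all add: Fq_def)
  have "2 * card (case_prod code ` code_pairs) = totient N * (q - 1)"
    using card_code_pairs card_code_pairs_eq_double by simp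
  then show ?thesis
    unfolding h_def n_def Fq_def[symmetric] N_def[symmetric] codes_eq_image_code_pairs
    by (simp flip: of_nat_mult)
qed

end
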